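(* For every $t>0$ the operator $P(t)$ is pre-Harris. In particular the semigroup $\{P(t)\}_{t\ge0}$ is partially integral.
   Context: Fix $\alpha>0$ and a Borel function $h\colon(0,1)\to[0,\infty)$ with $\int_0^1 h(r)r\,dr=1$. Let $m(dx)=x\,dx$ on $E=(0,\infty)$, $L^1=L^1(E,m)$, $D(m)$ the set of nonnegative $f\in L^1$ with $\int f\,dm=1$. Let $\varepsilon_n$ be i.i.d. exponential with mean $1$, $\theta_n$ i.i.d. on $(0,1)$ with $P(\theta_n\le r)=\int_0^r h(z)z\,dz$, all independent. The process $\{X(t)\}_{t\ge0}$ started at $X_0=x>0$ is defined by $X(t)=e^{t-t_n}X_n$ for $t_n\le t<t_{n+1}$, where $t_0=0$, $t_n=t_{n-1}+\frac1\alpha\log\big(\varepsilon_n X_{n-1}^{-\alpha}+1\big)$ and $X_n=\theta_n(\varepsilon_n+X_{n-1}^\alpha)^{1/\alpha}$ (a piecewise deterministic Markov process with flow $\pi_t x=e^tx$, jump rate $\varphi(x)=\alpha x^\alpha$ and jumps $x\mapsto\theta x$). $\{P(t)\}_{t\ge0}$ is the stochastic semigroup on $L^1$ such that if $X(0)$ has density $f\in D(m)$ with respect to $m$, then $X(t)$ has density $P(t)f$ with respect to $m$ (it solves $\partial_t u=-\frac1x\partial_x(x^2u)-\varphi u+\int_x^\infty \frac1y h(x/y)\varphi(y)u(t,y)\,dy$). A stochastic operator $Q$ on $L^1$ is pre-Harris if there is a measurable $p\colon E\times E\to[0,\infty)$ with $Qf(x)\ge\int_E p(x,y)f(y)\,m(dy)$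 for $m$-a.e. $x$ and all $f\in D(m)$, and $\int_E p(x,y)\,m(dy)>0$ for $m$-a.e. $x$; it is partially integral if such $p$ exists with $\int_E\int_E p(x,y)\,m(dx)\,m(dy)>0$. The semigroup is partially integral if $P(s)$ is partially integral for some $s>0$. *)

theory Defs
  imports "HOL-Probability.Probability"
begin

text \<open>The measure m(dx) = x dx on E = (0,infinity), realised on the real line
  (it gives zero mass to the complement of (0,infinity)).\<close>
definition mE :: "real measure" where
  "mE = density lborel (\<lambda>x. ennreal (indicator {0<..} x * x))"

definition Dens :: "real measure \<Rightarrow> (real \<Rightarrow> real) set" where
  "Dens M = {f. f \<in> borel_measurable M \<and> (AE x in M. 0 \<le> f x) \<and>
                integrable M f \<and> integral\<^sup>L M f = 1}"

definition pre_Harris :: "real measure \<Rightarrow> ((real \<Rightarrow> real) \<Rightarrow> real \<Rightarrow> real) \<Rightarrow> bool" where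
  "pre_Harris M Q \<longleftrightarrow> (\<exists>p :: real \<Rightarrow> real \<Rightarrow> real.
      (\<lambda>(x, y). p x y) \<in> borel_measurable (M \<Otimes>\<^sub>M M) \<and> (\<forall>x y. 0 \<le> p x y) \<and>
      (\<forall>f \<in> Dens M. AE x in M. (\<integral>\<^sup>+ y. ennreal (p x y * f y) \<partial>M) \<le> ennreal (Q f x)) \<and>
      (AE x in M. 0 < (\<integral>\<^sup>+ y. ennreal (p x y) \<partial>M)))"

definition partially_integral :: "real measure \<Rightarrow> ((real \<Rightarrow> real) \<Rightarrow> real \<Rightarrow> real) \<Rightarrow> bool" where
  "partially_integral M Q \<longleftrightarrow> (\<exists>p :: real \<Rightarrow> real \<Rightarrow> real.
      (\<lambda>(x, y). p x y) \<in> borel_measurable (M \<Otimes>\<^sub>M M) \<and> (\<forall>x y. 0 \<le> p x y) \<and>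
      (\<forall>f \<in> Dens M. AE x in M. (\<integral>\<^sup>+ y. ennreal (p x y * f y) \<partial>M) \<le> ennreal (Q f x)) \<and>
      0 < (\<integral>\<^sup>+ x. \<integral>\<^sup>+ y. ennreal (p x y) \<partial>M \<partial>M))"

text \<open>Jump chain (t_n, X_n) driven by sequences e (e n = epsilon_(n+1)) and
  th (th n = theta_(n+1)), started at X_0 = x.\<close>
fun jstate :: "real \<Rightarrow> real \<Rightarrow> (nat \<Rightarrow> real) \<Rightarrow> (nat \<Rightarrow> real) \<Rightarrow> nat \<Rightarrow> real \<times> real" where
  "jstate \<alpha> x e th 0 = (0, x)"
| "jstate \<alpha> x e th (Suc n) =
     (let (tn, Xn) = jstate \<alpha> x e th n in
       (tn + (1 / \<alpha>) * ln (e n * Xn powr (- \<alpha>) + 1),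
        th n * (e n + Xn powr \<alpha>) powr (1 / \<alpha>)))"

text \<open>X(t) = e^(t - t_N) X_N for t_N <= t < t_(N+1); on the (null) event of
  explosion before t the value is set to 0.\<close>
definition Xpath :: "real \<Rightarrow> real \<Rightarrow> (nat \<Rightarrow> real) \<Rightarrow> (nat \<Rightarrow> real) \<Rightarrow> real \<Rightarrow> real" where
  "Xpath \<alpha> x e th t =
     (if \<exists>n. t < fst (jstate \<alpha> x e th (Suc n)) then
        (let N = (LEAST n. t < fst (jstate \<alpha> x e th (Suc n)))
         in exp (t - fst (jstate \<alpha> x e th N)) * snd (jstate \<alpha> x e th N))
      else 0)"

definition epsM :: "real measure" where
  "epsM = density lborel (\<lambda>z. ennreal (exponential_density 1 z))"

definition thetaM :: "(real \<Rightarrow> real) \<Rightarrow> real measure" where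
  "thetaM h = density lborel (\<lambda>z. ennreal (indicator {0<..<1} z * h z * z))"

definition lawX :: "real \<Rightarrow> (real \<Rightarrow> real) \<Rightarrow> real \<Rightarrow> (real \<Rightarrow> real) \<Rightarrow> real measure" where
  "lawX \<alpha> h t f =
     distr (density mE (\<lambda>x. ennreal (f x)) \<Otimes>\<^sub>M
             ((\<Pi>\<^sub>M n\<in>(UNIV :: nat set). epsM) \<Otimes>\<^sub>M (\<Pi>\<^sub>M n\<in>(UNIV :: nat set). thetaM h)))
           borel (\<lambda>(x, (e, th)). Xpath \<alpha> x e th t)"

definition Pt :: "real \<Rightarrow> (real \<Rightarrow> real) \<Rightarrow> real \<Rightarrow> (real \<Rightarrow> real) \<Rightarrow> real \<Rightarrow> real" where
  "Pt \<alpha> h t f = (\<lambda>x. enn2real (RN_deriv mE (lawX \<alpha> h t f) x))"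

definition semigroup_partially_integral :: "(real \<Rightarrow> (real \<Rightarrow> real) \<Rightarrow> real \<Rightarrow> real) \<Rightarrow> bool" where
  "semigroup_partially_integral P \<longleftrightarrow> (\<exists>s>0. partially_integral mE (P s))"

end

theory Submission
  imports Defs
begin

(*
  Started at x > 0, the path jumps at most once before time t with positive probability
  (1 - e^-c) e^-c, where c = x^alpha (e^(alpha t) - 1) is the level the first exponential clock
  must stay below and the second must exceed; on that event X(t) = e^t x theta_1.  Hence the law
  of X(t) dominates the law of e^t x theta_1 weighted by this probability, which has an explicit
  density with respect to m; integrating against f gives a kernel below P(t) f.  The kernel has
  positive mass for m-almost every target point because scalings x -> c x preserve m-null sets,
  and the same fact shows that the law of X(t) (always a scaling e^t x theta_1 ... theta_N of the
  initial point) is absolutely continuous with respect to m, so that P(t) f is its density.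
*)

lemma unbounded_partial_sums:
  fixes e :: "nat \<Rightarrow> real"
  assumes nonneg: "\<And>n. 0 \<le> e n" and often: "\<And>n. \<exists>i\<ge>n. 1 \<le> e i"
  shows "\<exists>n. B < (\<Sum>i<n. e i)"
proof (rule ccontr)
  assume "\<nexists>n. B < (\<Sum>i<n. e i)"
  then have "(\<Sum>i\<le>n. e i) \<le> B" for n
    by (metis lessThan_Suc_atMost not_less)
  then have "e \<longlonglongrightarrow> 0"
    by (intro summable_LIMSEQ_zero bounded_imp_summable[OF nonneg])
  then obtain n where "\<forall>i\<ge>n. \<bar>e i\<bar> < 1"
    using LIMSEQ_D[of e 0 1] by auto
  with often[of n] show False by fastforce
qed

lemma AE_PiM_infinitely_often_notin:
  assumes M: "prob_space M" and A[measurable]: "A \<in> sets M" and small: "emeasure M A < 1"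
  shows "AE \<omega> in (\<Pi>\<^sub>M i\<in>(UNIV :: nat set). M). \<forall>n. \<exists>i\<ge>n. \<omega> i \<notin> A"
proof -
  let ?P = "\<Pi>\<^sub>M i\<in>(UNIV :: nat set). M"
  define q where "q = enn2real (emeasure M A)"
  have q: "emeasure M A = ennreal q" "0 \<le> q" "q < 1"
    using small unfolding q_def
    by (metis ennreal_enn2real less_top order_less_imp_not_less,
        simp, metis enn2real_less_iff ennreal_1 less_top order_less_imp_not_less)
  have "AE \<omega> in ?P. \<exists>i\<ge>n. \<omega> i \<notin> A" for n
  proof -
    define N where "N = {\<omega> \<in> space ?P. \<forall>i\<ge>n. \<omega> i \<in> A}"
    have bound: "emeasure ?P N \<le> ennreal (q ^ k)" for k
    proof -
      have "N \<subseteq> prod_emb UNIV (\<lambda>_. M) {n..<n+k} (Pi\<^sub>E {n..<n+k} (\<lambda>_. A))"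
        by (auto simp: N_def prod_emb_def PiE_iff space_PiM)
      then have "emeasure ?P N \<le> emeasure ?P (prod_emb UNIV (\<lambda>_. M) {n..<n+k} (Pi\<^sub>E {n..<n+k} (\<lambda>_. A)))"
        by (intro emeasure_mono sets_PiM_I) auto
      also have "\<dots> = ennreal q ^ k"
        using M q by (subst emeasure_PiM_emb) auto
      finally show ?thesis
        using q by (simp add: ennreal_power)
    qed
    have "(\<lambda>k. ennreal (q ^ k)) \<longlonglongrightarrow> ennreal 0"
      using q by (intro tendsto_ennrealI LIMSEQ_power_zero) auto
    then have "emeasure ?P N \<le> 0"
      using tendsto_le[OF trivial_limit_sequentially _ tendsto_const] bound by fastforce
    moreover have "N \<in> sets ?P"
      unfolding N_def by measurable
    ultimately show ?thesis
      by (intro AE_I'[of N]) (auto simp: N_def)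
  qed
  then show ?thesis
    by (simp add: AE_all_countable)
qed

lemma product_prob_space_const: "prob_space M \<Longrightarrow> product_prob_space (\<lambda>_. M)"
  by (simp add: product_prob_space_def product_prob_space_axioms_def product_sigma_finite_def
      prob_space_imp_sigma_finite)

lemma AE_pair_measure_fst_snd:
  assumes M2: "sigma_finite_measure M2"
    and P: "AE x in M1. P x" and Q: "AE y in M2. Q y"
  shows "AE z in M1 \<Otimes>\<^sub>M M2. P (fst z) \<and> Q (snd z)"
proof -
  interpret M2: sigma_finite_measure M2 by (rule M2)
  obtain N1 N2 where N: "{x \<in> space M1. \<not> P x} \<subseteq> N1" "N1 \<in> null_sets M1"
    "{y \<in> space M2. \<not> Q y} \<subseteq> N2" "N2 \<in> null_sets M2"
    using P Q unfolding eventually_ae_filter by blast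
  have "N1 \<times> space M2 \<union> space M1 \<times> N2 \<in> null_sets (M1 \<Otimes>\<^sub>M M2)"
    using N by (intro null_sets.Un M2.times_in_null_sets1 M2.times_in_null_sets2) auto
  moreover have "{z \<in> space (M1 \<Otimes>\<^sub>M M2). \<not> (P (fst z) \<and> Q (snd z))} \<subseteq> N1 \<times> space M2 \<union> space M1 \<times> N2"
    using N by (auto simp: space_pair_measure)
  ultimately show ?thesis
    by (rule AE_I')
qed

lemma AE_le_if_nn_set_integral_le:
  fixes k g :: "'a \<Rightarrow> ennreal"
  assumes [measurable]: "k \<in> borel_measurable M" "g \<in> borel_measurable M"
    and finite: "integral\<^sup>N M g \<noteq> \<infinity>"
    and le: "\<And>B. B \<in> sets M \<Longrightarrow> (\<integral>\<^sup>+ x. k x * indicator B x \<partial>M) \<le> (\<integral>\<^sup>+ x. g x * indicator B x \<partial>M)"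
  shows "AE x in M. k x \<le> g x"
proof -
  define N where "N = {x \<in> space M. g x < k x}"
  have N: "N \<in> sets M"
    unfolding N_def by measurable
  have "(\<integral>\<^sup>+ x. g x * indicator N x \<partial>M) \<le> integral\<^sup>N M g"
    by (intro nn_integral_mono) (auto split: split_indicator)
  then have g_fin: "(\<integral>\<^sup>+ x. g x * indicator N x \<partial>M) \<noteq> \<infinity>"
    using finite by (auto simp: top_unique)
  have "(\<integral>\<^sup>+ x. (k x - g x) * indicator N x \<partial>M) = (\<integral>\<^sup>+ x. k x * indicator N x - g x * indicator N x \<partial>M)"
    by (auto intro!: nn_integral_cong simp: indicator_def)
  also have "\<dots> = (\<integral>\<^sup>+ x. k x * indicator N x \<partial>M) - (\<integral>\<^sup>+ x. g x * indicator N x \<partial>M)"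
    using g_fin by (intro nn_integral_diff) (auto simp: N_def split: split_indicator)
  also have "\<dots> = 0"
    using le[OF N] g_fin by (intro diff_eq_0_ennreal) (auto simp: less_top intro: order.strict_trans1)
  finally have "AE x in M. (k x - g x) * indicator N x = 0"
    using N by (subst (asm) nn_integral_0_iff_AE) auto
  with AE_space show ?thesis
  proof eventually_elim
    case (elim x)
    show ?case
    proof (rule ccontr)
      assume "\<not> k x \<le> g x"
      then have gk: "g x < k x"
        by (simp add: not_le)
      then have "0 < k x - g x"
        by (rule diff_gr0_ennreal)
      moreover have "x \<in> N"
        using gk elim(1) by (simp add: N_def)
      ultimately show False
        using elim(2) by simp
    qed
  qed
qed

lemma vimage_scale_sets_borel:
  assumes "B \<in> sets borel"
  shows "(\<lambda>x. c * x) -` B \<in> sets (borel :: real measure)"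
  by (intro measurable_sets_borel[OF _ assms] borel_measurable_continuous_onI continuous_intros)

lemma emeasure_vimage_scale:
  fixes M :: "real measure"
  assumes "sets M = sets borel" "B \<in> sets borel"
  shows "emeasure M ((\<lambda>x. c * x) -` B) = (\<integral>\<^sup>+ x. indicator B (c * x) \<partial>M)"
  using vimage_scale_sets_borel[OF assms(2), of c] assms(1)
  by (simp add: nn_integral_indicator[symmetric] indicator_def del: nn_integral_indicator)

lemma partially_integral_if_pre_Harris:
  assumes "sigma_finite_measure M" "emeasure M (space M) \<noteq> 0" "pre_Harris M Q"
  shows "partially_integral M Q"
proof -
  interpret sigma_finite_measure M by fact
  obtain p where p: "(\<lambda>(x, y). p x y) \<in> borel_measurable (M \<Otimes>\<^sub>M M)" "\<forall>x y. 0 \<le> p x y"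
    "\<forall>f \<in> Dens M. AE x in M. (\<integral>\<^sup>+ y. ennreal (p x y * f y) \<partial>M) \<le> ennreal (Q f x)"
    and pos: "AE x in M. 0 < (\<integral>\<^sup>+ y. ennreal (p x y) \<partial>M)"
    using assms(3) unfolding pre_Harris_def by blast
  have "(\<lambda>z. ennreal (case z of (x, y) \<Rightarrow> p x y)) \<in> borel_measurable (M \<Otimes>\<^sub>M M)"
    using p(1) by measurable
  then have meas: "(\<lambda>x. \<integral>\<^sup>+ y. ennreal (p x y) \<partial>M) \<in> borel_measurable M"
    by (intro borel_measurable_nn_integral) (simp add: case_prod_beta)
  have "0 < (\<integral>\<^sup>+ x. \<integral>\<^sup>+ y. ennreal (p x y) \<partial>M \<partial>M)"
  proof (rule ccontr)
    assume "\<not> ?thesis"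
    then have "AE x in M. (\<integral>\<^sup>+ y. ennreal (p x y) \<partial>M) = 0"
      using meas by (simp add: nn_integral_0_iff_AE)
    with pos have "AE x in M. False"
      by eventually_elim simp
    then show False
      using assms(2) ae_filter_eq_bot_iff trivial_limit_def by metis
  qed
  then show ?thesis
    unfolding partially_integral_def using p by blast
qed

section \<open>The jump chain in closed form\<close>

definition theta_prod :: "(nat \<Rightarrow> real) \<Rightarrow> nat \<Rightarrow> real" where
  "theta_prod th n = (\<Prod>i<n. th i)"

definition clock_sum :: "real \<Rightarrow> (nat \<Rightarrow> real) \<Rightarrow> (nat \<Rightarrow> real) \<Rightarrow> nat \<Rightarrow> real" where
  "clock_sum \<alpha> e th n = (\<Sum>i<n. e i / theta_prod th i powr \<alpha>)"

lemma theta_prod_pos: "(\<And>n. 0 < th n) \<Longrightarrow> 0 < theta_prod th n"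
  unfolding theta_prod_def by (simp add: prod_pos)

lemma theta_prod_le_1: "(\<And>n. 0 < th n) \<Longrightarrow> (\<And>n. th n \<le> 1) \<Longrightarrow> theta_prod th n \<le> 1"
  unfolding theta_prod_def by (intro prod_le_1) (auto simp: less_imp_le)

lemma clock_sum_nonneg: "(\<And>n. 0 \<le> e n) \<Longrightarrow> 0 \<le> clock_sum \<alpha> e th n"
  unfolding clock_sum_def by (intro sum_nonneg) auto

lemma sum_le_clock_sum:
  assumes "0 < \<alpha>" "\<And>n. 0 \<le> e n" "\<And>n. 0 < th n" "\<And>n. th n \<le> 1"
  shows "(\<Sum>i<n. e i) \<le> clock_sum \<alpha> e th n"
  unfolding clock_sum_def
proof (rule sum_mono)
  fix i
  have "0 < theta_prod th i" "theta_prod th i \<le> 1"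
    using theta_prod_pos theta_prod_le_1 assms(3,4) by blast+
  then have "0 < theta_prod th i powr \<alpha>" "theta_prod th i powr \<alpha> \<le> 1"
    using assms(1) by (auto simp: powr_le1)
  then show "e i \<le> e i / theta_prod th i powr \<alpha>"
    using assms(2)[of i] by (simp add: le_divide_eq mult_left_le)
qed

lemma jump_step_powr:
  fixes \<alpha> e T R :: real
  assumes "0 < \<alpha>" "0 \<le> e" "0 < T" "0 < R"
  defines "R' \<equiv> R + e / T powr \<alpha>"
  shows "e * (T * R powr (1/\<alpha>)) powr (- \<alpha>) + 1 = R' / R"
    and "(e + (T * R powr (1/\<alpha>)) powr \<alpha>) powr (1/\<alpha>) = T * R' powr (1/\<alpha>)"
proof -
  have X: "(T * R powr (1/\<alpha>)) powr \<alpha> = T powr \<alpha> * R"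
    using assms by (simp add: powr_mult powr_powr)
  then show "e * (T * R powr (1/\<alpha>)) powr (- \<alpha>) + 1 = R' / R"
    using assms by (simp add: powr_minus_divide R'_def field_simps)
  have "e + T powr \<alpha> * R = T powr \<alpha> * R'" "0 \<le> R'"
    using assms by (simp_all add: R'_def field_simps)
  then show "(e + (T * R powr (1/\<alpha>)) powr \<alpha>) powr (1/\<alpha>) = T * R' powr (1/\<alpha>)"
    using assms X by (simp add: powr_mult powr_powr)
qed

lemma jstate_closed_form:
  assumes "0 < \<alpha>" "0 < x" "\<And>n. 0 \<le> e n" "\<And>n. 0 < th n"
  shows "fst (jstate \<alpha> x e th n) = (1/\<alpha>) * ln ((x powr \<alpha> + clock_sum \<alpha> e th n) / x powr \<alpha>)"
    and "snd (jstate \<alpha> x e th n) = theta_prod th n * (x powr \<alpha> + clock_sum \<alpha> e th n) powr (1/\<alpha>)"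
proof (induction n)
  case 0
  show "fst (jstate \<alpha> x e th 0) = (1/\<alpha>) * ln ((x powr \<alpha> + clock_sum \<alpha> e th 0) / x powr \<alpha>)"
    and "snd (jstate \<alpha> x e th 0) = theta_prod th 0 * (x powr \<alpha> + clock_sum \<alpha> e th 0) powr (1/\<alpha>)"
    using assms by (simp_all add: clock_sum_def theta_prod_def powr_powr)
next
  case (Suc n)
  define R where "R = x powr \<alpha> + clock_sum \<alpha> e th n"
  define T where "T = theta_prod th n"
  have R: "0 < R" "0 < x powr \<alpha>"
    using clock_sum_nonneg[OF assms(3)] assms(2) by (auto simp: R_def add_pos_nonneg)
  have T: "0 < T" using theta_prod_pos[OF assms(4)] by (simp add: T_def)
  have R': "x powr \<alpha> + clock_sum \<alpha> e th (Suc n) = R + e n / T powr \<alpha>"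
    by (simp add: R_def T_def clock_sum_def)
  have t: "fst (jstate \<alpha> x e th n) = (1/\<alpha>) * ln (R / x powr \<alpha>)"
    and X: "snd (jstate \<alpha> x e th n) = T * R powr (1/\<alpha>)"
    using Suc.IH by (simp_all add: R_def T_def)
  note step = jump_step_powr[OF assms(1) assms(3)[of n] T R(1)]
  have "fst (jstate \<alpha> x e th (Suc n)) = (1/\<alpha>) * (ln (R / x powr \<alpha>) + ln ((R + e n / T powr \<alpha>) / R))"
    by (simp add: case_prod_beta Let_def t X step(1) distrib_left)
  also have "\<dots> = (1/\<alpha>) * ln ((R + e n / T powr \<alpha>) / x powr \<alpha>)"
  proof -
    have "0 < R + e n / T powr \<alpha>" using R T assms(3)[of n] by (simp add: add_pos_nonneg)
    then show ?thesis using R by (simp add: ln_div)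
  qed
  finally show "fst (jstate \<alpha> x e th (Suc n)) = (1/\<alpha>) * ln ((x powr \<alpha> + clock_sum \<alpha> e th (Suc n)) / x powr \<alpha>)"
    by (simp only: R')
  show "snd (jstate \<alpha> x e th (Suc n)) = theta_prod th (Suc n) * (x powr \<alpha> + clock_sum \<alpha> e th (Suc n)) powr (1/\<alpha>)"
    by (simp add: case_prod_beta Let_def X step(2) R') (simp add: T_def theta_prod_def)
qed

lemma jump_time_less_iff:
  assumes "0 < \<alpha>" "0 < x" "\<And>n. 0 \<le> e n" "\<And>n. 0 < th n"
  shows "t < fst (jstate \<alpha> x e th n) \<longleftrightarrow> x powr \<alpha> * exp (\<alpha> * t) < x powr \<alpha> + clock_sum \<alpha> e th n"
proof -
  define R where "R = x powr \<alpha> + clock_sum \<alpha> e th n"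
  have pos: "0 < x powr \<alpha>" "0 < R / x powr \<alpha>"
    using clock_sum_nonneg[OF assms(3)] assms(2) by (auto simp: R_def add_pos_nonneg)
  have "t < fst (jstate \<alpha> x e th n) \<longleftrightarrow> \<alpha> * t < ln (R / x powr \<alpha>)"
    using assms(1) by (simp add: jstate_closed_form[OF assms] R_def field_simps)
  also have "\<dots> \<longleftrightarrow> exp (\<alpha> * t) < R / x powr \<alpha>"
    using pos by (metis exp_less_cancel_iff exp_ln)
  also have "\<dots> \<longleftrightarrow> x powr \<alpha> * exp (\<alpha> * t) < R"
    using pos by (simp add: field_simps)
  finally show ?thesis by (simp add: R_def)
qed

lemma Xpath_eq_first_jump_after:
  assumes "0 < \<alpha>" "0 < x" "\<And>n. 0 \<le> e n" "\<And>n. 0 < th n"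
    and "t < fst (jstate \<alpha> x e th (Suc n))"
  shows "Xpath \<alpha> x e th t = exp t * x * theta_prod th (LEAST n. t < fst (jstate \<alpha> x e th (Suc n)))"
proof -
  define N where "N = (LEAST n. t < fst (jstate \<alpha> x e th (Suc n)))"
  define R where "R = x powr \<alpha> + clock_sum \<alpha> e th N"
  have R: "0 < R" "0 < x powr \<alpha>"
    using clock_sum_nonneg[OF assms(3)] assms(2) by (auto simp: R_def add_pos_nonneg)
  have "exp ((1/\<alpha>) * ln (R / x powr \<alpha>)) = (R / x powr \<alpha>) powr (1/\<alpha>)"
    using R by (simp add: powr_def)
  also have "\<dots> = R powr (1/\<alpha>) / x"
    using R assms(1,2) by (simp add: powr_divide powr_powr)
  finally have "exp ((1/\<alpha>) * ln (R / x powr \<alpha>)) = R powr (1/\<alpha>) / x" .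
  moreover have "Xpath \<alpha> x e th t = exp t / exp ((1/\<alpha>) * ln (R / x powr \<alpha>)) * (theta_prod th N * R powr (1/\<alpha>))"
    using assms(5) by (auto simp: Xpath_def Let_def jstate_closed_form[of \<alpha> x e th, OF assms(1-4)] exp_diff N_def R_def)
  ultimately show ?thesis
    using R assms(2) by (simp add: N_def)
qed

lemma Xpath_eq_scaled_theta_prod:
  assumes "0 < \<alpha>" "0 < x" "\<And>n. 0 \<le> e n" "\<And>n. 0 < th n" "\<And>n. th n \<le> 1"
    and unbounded: "\<forall>B. \<exists>n. B < (\<Sum>i<n. e i)"
  shows "\<exists>N. Xpath \<alpha> x e th t = exp t * x * theta_prod th N"
proof -
  obtain n where n: "x powr \<alpha> * exp (\<alpha> * t) < (\<Sum>i<n. e i)"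
    using unbounded by blast
  have "(\<Sum>i<n. e i) \<le> (\<Sum>i<Suc n. e i)"
    using assms(3)[of n] by simp
  also have "\<dots> \<le> clock_sum \<alpha> e th (Suc n)"
    by (rule sum_le_clock_sum) (use assms in auto)
  finally have "(\<Sum>i<n. e i) \<le> clock_sum \<alpha> e th (Suc n)" .
  moreover have "0 < x powr \<alpha>"
    using assms(2) by simp
  ultimately have "t < fst (jstate \<alpha> x e th (Suc n))"
    unfolding jump_time_less_iff[of \<alpha> x e th, OF assms(1-4)] using n by linarith
  then show ?thesis using Xpath_eq_first_jump_after[of \<alpha> x e th, OF assms(1-4)] by blast
qed

lemma Xpath_single_jump:
  assumes "0 < \<alpha>" "0 < x" "\<And>n. 0 \<le> e n" "\<And>n. 0 < th n" "\<And>n. th n \<le> 1"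
    and "e 0 \<le> x powr \<alpha> * (exp (\<alpha> * t) - 1)" "x powr \<alpha> * (exp (\<alpha> * t) - 1) < e 1"
  shows "Xpath \<alpha> x e th t = exp t * x * th 0"
proof -
  have "clock_sum \<alpha> e th 1 = e 0" by (simp add: clock_sum_def theta_prod_def)
  then have not1: "\<not> t < fst (jstate \<alpha> x e th 1)"
    unfolding jump_time_less_iff[of \<alpha> x e th, OF assms(1-4)] using assms(6) by (simp add: algebra_simps)
  have "e 0 + e 1 \<le> clock_sum \<alpha> e th (Suc 1)"
    using sum_le_clock_sum[of \<alpha> e th 2] assms by (simp add: numeral_2_eq_2)
  then have two: "t < fst (jstate \<alpha> x e th (Suc 1))"
    unfolding jump_time_less_iff[of \<alpha> x e th, OF assms(1-4)] using assms(3)[of 0] assms(6,7) by (simp add: algebra_simps)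
  have "(LEAST n. t < fst (jstate \<alpha> x e th (Suc n))) = 1"
  proof (rule Least_equality)
    fix m assume "t < fst (jstate \<alpha> x e th (Suc m))"
    with not1 show "1 \<le> m" by (metis One_nat_def Suc_leI neq0_conv)
  qed (rule two)
  then show ?thesis
    using Xpath_eq_first_jump_after[OF assms(1-4) two] by (simp add: theta_prod_def)
qed

abbreviation noise_space :: "((nat \<Rightarrow> real) \<times> (nat \<Rightarrow> real)) measure" where
  "noise_space \<equiv> (\<Pi>\<^sub>M n\<in>UNIV. borel) \<Otimes>\<^sub>M (\<Pi>\<^sub>M n\<in>UNIV. borel)"

lemma measurable_jstate:
  "(\<lambda>\<omega>. fst (jstate \<alpha> (fst \<omega>) (fst (snd \<omega>)) (snd (snd \<omega>)) n)) \<in> borel_measurable (borel \<Otimes>\<^sub>M noise_space)"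
  "(\<lambda>\<omega>. snd (jstate \<alpha> (fst \<omega>) (fst (snd \<omega>)) (snd (snd \<omega>)) n)) \<in> borel_measurable (borel \<Otimes>\<^sub>M noise_space)"
proof (induction n)
  case (Suc n)
  note Suc.IH[measurable]
  show "(\<lambda>\<omega>. fst (jstate \<alpha> (fst \<omega>) (fst (snd \<omega>)) (snd (snd \<omega>)) (Suc n))) \<in> borel_measurable (borel \<Otimes>\<^sub>M noise_space)"
    and "(\<lambda>\<omega>. snd (jstate \<alpha> (fst \<omega>) (fst (snd \<omega>)) (snd (snd \<omega>)) (Suc n))) \<in> borel_measurable (borel \<Otimes>\<^sub>M noise_space)"
    by (simp_all add: case_prod_beta Let_def) measurable
qed simp_all

lemma measurable_Xpath:
  "(\<lambda>(x, e, th). Xpath \<alpha> x e th t) \<in> borel_measurable (borel \<Otimes>\<^sub>M noise_space)"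
proof -
  note measurable_jstate[measurable]
  let ?T = "\<lambda>\<omega> n. fst (jstate \<alpha> (fst \<omega>) (fst (snd \<omega>)) (snd (snd \<omega>)) n)"
  let ?X = "\<lambda>\<omega> n. snd (jstate \<alpha> (fst \<omega>) (fst (snd \<omega>)) (snd (snd \<omega>)) n)"
  have [measurable]: "(\<lambda>\<omega>. LEAST n. t < ?T \<omega> (Suc n)) \<in> measurable (borel \<Otimes>\<^sub>M noise_space) (count_space UNIV)"
    by measurable
  have jump_value: "(\<lambda>\<omega>. exp (t - ?T \<omega> (LEAST n. t < ?T \<omega> (Suc n))) * ?X \<omega> (LEAST n. t < ?T \<omega> (Suc n)))
      \<in> borel_measurable (borel \<Otimes>\<^sub>M noise_space)"
    by (rule measurable_compose_countable[where f = "\<lambda>N \<omega>. exp (t - ?T \<omega> N) * ?X \<omega> N"]) measurable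
  show ?thesis
    unfolding Xpath_def Let_def case_prod_beta by (intro measurable_If jump_value) measurable
qed

lemma sets_mE [measurable_cong]: "sets mE = sets borel"
  by (simp add: mE_def)

lemma space_mE [simp]: "space mE = UNIV"
  by (simp add: mE_def)

lemma sigma_finite_mE: "sigma_finite_measure mE"
  unfolding mE_def
  by (subst sigma_finite_measure.sigma_finite_iff_density_finite'[OF sigma_finite_lborel]) auto

lemma emeasure_mE_space_ne_0: "emeasure mE (space mE) \<noteq> 0"
proof -
  have "1 = (\<integral>\<^sup>+ y. indicator {1..2::real} y \<partial>lborel)"
    by simp
  also have "\<dots> \<le> (\<integral>\<^sup>+ y. ennreal (indicator {0<..} y * y) * indicator UNIV y \<partial>lborel)"
    by (intro nn_integral_mono) (auto simp: indicator_def)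
  also have "\<dots> = emeasure mE (space mE)"
    by (simp add: mE_def emeasure_density)
  finally show ?thesis
    by auto
qed

lemma emeasure_mE_nonpos: "emeasure mE {..0} = 0"
  unfolding mE_def by (subst emeasure_density) (auto simp: nn_integral_0_iff_AE indicator_def)

lemma emeasure_mE_scale:
  assumes c: "0 < c" and A: "A \<in> sets borel"
  shows "emeasure mE A = ennreal (c * c) * emeasure mE ((\<lambda>x. c * x) -` A)"
proof -
  have A': "(\<lambda>x. c * x) -` A \<in> sets borel"
    by (rule vimage_scale_sets_borel[OF A])
  have "emeasure mE A = (\<integral>\<^sup>+ y. ennreal (indicator {0<..} y * y) * indicator A y \<partial>lborel)"
    using A by (simp add: mE_def emeasure_density)
  also have "\<dots> = ennreal c * (\<integral>\<^sup>+ x. ennreal (indicator {0<..} (0 + c * x) * (0 + c * x)) * indicator A (0 + c * x) \<partial>lborel)"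
    using A c by (subst nn_integral_real_affine[where c = c and t = 0]) auto
  also have "(\<integral>\<^sup>+ x. ennreal (indicator {0<..} (0 + c * x) * (0 + c * x)) * indicator A (0 + c * x) \<partial>lborel)
      = (\<integral>\<^sup>+ x. ennreal c * (ennreal (indicator {0<..} x * x) * indicator ((\<lambda>x. c * x) -` A) x) \<partial>lborel)"
    using c by (intro nn_integral_cong) (auto simp: indicator_def ennreal_mult zero_less_mult_iff)
  also have "\<dots> = ennreal c * emeasure mE ((\<lambda>x. c * x) -` A)"
    using A' by (simp add: nn_integral_cmult mE_def emeasure_density)
  finally show ?thesis
    using c by (simp add: ennreal_mult mult.assoc)
qed

lemma null_sets_mE_scale:
  assumes "0 < c" "A \<in> null_sets mE"
  shows "(\<lambda>x. c * x) -` A \<in> null_sets mE"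
proof -
  have A: "A \<in> sets borel"
    using assms(2) by (simp add: null_sets_def sets_mE)
  then have "(\<lambda>x. c * x) -` A \<in> sets borel"
    by (rule vimage_scale_sets_borel)
  moreover have "ennreal (c * c) * emeasure mE ((\<lambda>x. c * x) -` A) = 0"
    using emeasure_mE_scale[OF assms(1) A] assms(2) by auto
  then have "emeasure mE ((\<lambda>x. c * x) -` A) = 0"
    using assms(1) by (auto simp: ennreal_eq_0_iff mult_le_0_iff)
  ultimately show ?thesis
    by (simp add: null_sets_def sets_mE)
qed

lemma AE_mE_Xpath_notin_null:
  assumes "0 < \<alpha>" "\<forall>n. 0 \<le> e n" "\<forall>B. \<exists>n. B < (\<Sum>i<n. e i)" "\<forall>n. 0 < th n \<and> th n \<le> 1"
    and A: "A \<in> null_sets mE"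
  shows "AE x in mE. Xpath \<alpha> x e th t \<notin> A"
proof -
  define N where "N = {..0} \<union> (\<Union>n. (\<lambda>x. (exp t * theta_prod th n) * x) -` A)"
  have "N \<in> null_sets mE"
    unfolding N_def
  proof (intro null_sets.Un null_sets_UN null_sets_mE_scale A)
    show "{..0} \<in> null_sets mE"
      using emeasure_mE_nonpos by (simp add: null_sets_def sets_mE)
    show "0 < exp t * theta_prod th n" for n
      using assms(4) by (simp add: theta_prod_pos)
  qed
  moreover have "Xpath \<alpha> x e th t \<notin> A" if "x \<notin> N" for x
  proof -
    have "0 < x"
      using that by (auto simp: N_def)
    have "\<exists>n. Xpath \<alpha> x e th t = exp t * x * theta_prod th n"
      by (rule Xpath_eq_scaled_theta_prod) (use assms \<open>0 < x\<close> in auto)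
    then obtain n where "Xpath \<alpha> x e th t = exp t * x * theta_prod th n" ..
    then show ?thesis
      using that by (auto simp: N_def mult_ac)
  qed
  ultimately show ?thesis
    by (intro AE_I'[of N]) auto
qed

lemma sets_epsM [measurable_cong]: "sets epsM = sets borel"
  by (simp add: epsM_def)

lemma space_epsM [simp]: "space epsM = UNIV"
  by (simp add: epsM_def)

lemma prob_space_epsM: "prob_space epsM"
  unfolding epsM_def using prob_space_exponential_density[of 1] by simp

lemma
  assumes "0 \<le> a"
  shows emeasure_epsM_atMost: "emeasure epsM {..a} = ennreal (1 - exp (- a))"
    and emeasure_epsM_greaterThan: "emeasure epsM {a<..} = ennreal (exp (- a))"
proof -
  interpret prob_space epsM by (rule prob_space_epsM)
  have "distributed epsM lborel (\<lambda>x. x) (exponential_density 1)"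
    by (auto simp: distributed_def epsM_def distr_id2)
  then show "emeasure epsM {..a} = ennreal (1 - exp (- a))"
    and "emeasure epsM {a<..} = ennreal (exp (- a))"
    using exponential_distributedD_le exponential_distributedD_gt assms
    by (auto simp: emeasure_eq_measure atMost_def greaterThan_def)
qed

abbreviation eps_seq :: "(nat \<Rightarrow> real) measure" where
  "eps_seq \<equiv> \<Pi>\<^sub>M n\<in>UNIV. epsM"

lemma AE_exponential_sequence_unbounded:
  "AE e in eps_seq. (\<forall>n. 0 \<le> e n) \<and> (\<forall>B. \<exists>n. B < (\<Sum>i<n. e i))"
proof -
  have "AE z in epsM. 0 \<le> z"
    unfolding epsM_def by (subst AE_density) (auto simp: exponential_density_def)
  then have "\<forall>n. AE e in eps_seq. 0 \<le> e n"
    by (auto intro: product_prob_space.AE_component product_prob_space_const prob_space_epsM)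
  then have "AE e in eps_seq. \<forall>n. 0 \<le> e n"
    by (simp add: AE_all_countable)
  moreover have "emeasure epsM {..<1} < 1"
  proof -
    have "emeasure epsM {..<1} \<le> emeasure epsM {..1}"
      by (intro emeasure_mono) (auto simp: sets_epsM)
    also have "\<dots> < 1"
      by (simp add: emeasure_epsM_atMost)
    finally show ?thesis .
  qed
  then have "AE e in eps_seq. \<forall>n. \<exists>i\<ge>n. e i \<notin> {..<1}"
    by (intro AE_PiM_infinitely_often_notin prob_space_epsM) (auto simp: sets_epsM)
  ultimately show ?thesis
  proof eventually_elim
    case (elim e)
    then show ?case
      using unbounded_partial_sums[of e] by (auto simp: not_less)
  qed
qed

lemma sets_thetaM [measurable_cong]: "sets (thetaM h) = sets borel"
  by (simp add: thetaM_def)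

lemma space_thetaM [simp]: "space (thetaM h) = UNIV"
  by (simp add: thetaM_def)

lemma measurable_Dens: "f \<in> Dens mE \<Longrightarrow> f \<in> borel_measurable borel"
  by (simp add: Dens_def measurable_cong_sets[OF sets_mE refl])

lemma prob_space_density_Dens:
  assumes "f \<in> Dens mE"
  shows "prob_space (density mE f)"
proof (rule prob_spaceI)
  have "emeasure (density mE f) (space (density mE f)) = (\<integral>\<^sup>+ x. ennreal (f x) \<partial>mE)"
    using assms by (subst emeasure_density) (auto simp: Dens_def)
  also have "\<dots> = ennreal (integral\<^sup>L mE f)"
    using assms unfolding Dens_def by (intro nn_integral_eq_integral) auto
  finally show "emeasure (density mE f) (space (density mE f)) = 1"
    using assms by (simp add: Dens_def)
qed

section \<open>The law of the process\<close>

locale growth_fragmentation =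
  fixes \<alpha> :: real and h :: "real \<Rightarrow> real"
  assumes alpha_pos: "0 < \<alpha>"
    and h_measurable: "(\<lambda>r. indicator {0<..<1} r * h r) \<in> borel_measurable borel"
    and h_nonneg: "\<forall>r\<in>{0<..<1}. 0 \<le> h r"
    and h_normalized: "(\<integral>\<^sup>+ r. ennreal (indicator {0<..<1} r * h r * r) \<partial>lborel) = 1"
begin

definition h01 :: "real \<Rightarrow> real" where
  "h01 r = indicator {0<..<1} r * h r"

lemma h01_measurable [measurable]: "h01 \<in> borel_measurable borel"
  using h_measurable by (simp add: h01_def[abs_def])

lemma h01_nonneg: "0 \<le> h01 r"
  using h_nonneg by (simp add: h01_def indicator_def)

lemma thetaM_eq: "thetaM h = density lborel (\<lambda>z. ennreal (h01 z * z))"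
  by (simp add: thetaM_def h01_def)

lemma prob_space_thetaM: "prob_space (thetaM h)"
  by (rule prob_spaceI) (simp add: thetaM_eq emeasure_density, simp add: h01_def h_normalized)

lemma AE_thetaM: "AE z in thetaM h. 0 < z \<and> z \<le> 1"
  unfolding thetaM_eq by (subst AE_density) (measurable, auto simp: h01_def indicator_def)

abbreviation theta_seq :: "(nat \<Rightarrow> real) measure" where
  "theta_seq \<equiv> \<Pi>\<^sub>M n\<in>UNIV. thetaM h"

abbreviation noise :: "((nat \<Rightarrow> real) \<times> (nat \<Rightarrow> real)) measure" where
  "noise \<equiv> eps_seq \<Otimes>\<^sub>M theta_seq"

lemma prob_space_noise: "prob_space noise"
  by (intro prob_space_pair prob_space_PiM prob_space_epsM prob_space_thetaM)

lemma AE_noise_regular: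
  "AE \<omega> in noise. ((\<forall>n. 0 \<le> fst \<omega> n) \<and> (\<forall>B. \<exists>n. B < (\<Sum>i<n. fst \<omega> i))) \<and> (\<forall>n. 0 < snd \<omega> n \<and> snd \<omega> n \<le> 1)"
proof (rule AE_pair_measure_fst_snd[OF _ AE_exponential_sequence_unbounded])
  show "sigma_finite_measure theta_seq"
    by (intro prob_space_imp_sigma_finite prob_space_PiM prob_space_thetaM)
  show "AE th in theta_seq. \<forall>n. 0 < th n \<and> th n \<le> 1"
    unfolding AE_all_countable
    by (intro allI product_prob_space.AE_component product_prob_space_const prob_space_thetaM AE_thetaM UNIV_I)
qed

lemma measurable_Xpath_noise [measurable]:
  "(\<lambda>(x, e, th). Xpath \<alpha> x e th t) \<in> borel_measurable (M \<Otimes>\<^sub>M noise)" if "sets M = sets borel"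
proof -
  have sets_eq: "sets (M \<Otimes>\<^sub>M noise) = sets (borel \<Otimes>\<^sub>M noise_space)"
    using that by (intro sets_pair_measure_cong sets_PiM_cong) (auto simp: sets_epsM sets_thetaM)
  show ?thesis
    by (subst measurable_cong_sets[OF sets_eq refl]) (rule measurable_Xpath)
qed

lemma measurable_Xpath_section [measurable]:
  "(\<lambda>\<omega>. Xpath \<alpha> x (fst \<omega>) (snd \<omega>) t) \<in> borel_measurable noise"
  using measurable_compose[OF measurable_Pair1'[of x borel noise] measurable_Xpath_noise[of borel t]]
  by (simp add: case_prod_beta)

lemma emeasure_lawX:
  assumes "f \<in> Dens mE" "B \<in> sets borel"
  shows "emeasure (lawX \<alpha> h t f) B = (\<integral>\<^sup>+ x. emeasure noise {\<omega> \<in> space noise. Xpath \<alpha> x (fst \<omega>) (snd \<omega>) t \<in> B} \<partial>density mE f)"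
proof -
  interpret noise: prob_space noise
    by (rule prob_space_noise)
  show ?thesis
    unfolding lawX_def using assms
    by (subst emeasure_distr) (auto simp: noise.emeasure_pair_measure_alt vimage_def space_pair_measure
        intro!: nn_integral_cong arg_cong2[where f = emeasure])
qed

lemma measurable_emeasure_Xpath_preimage:
  assumes B: "B \<in> sets borel"
  shows "(\<lambda>y. emeasure noise {\<omega> \<in> space noise. Xpath \<alpha> y (fst \<omega>) (snd \<omega>) t \<in> B}) \<in> borel_measurable borel"
proof -
  interpret noise: prob_space noise
    by (rule prob_space_noise)
  have S: "(\<lambda>(y, e, th). Xpath \<alpha> y e th t) -` B \<inter> space (borel \<Otimes>\<^sub>M noise) \<in> sets (borel \<Otimes>\<^sub>M noise)"
    by (rule measurable_sets[OF measurable_Xpath_noise B]) simp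
  have slice: "Pair y -` ((\<lambda>(y, e, th). Xpath \<alpha> y e th t) -` B \<inter> space (borel \<Otimes>\<^sub>M noise))
      = {\<omega> \<in> space noise. Xpath \<alpha> y (fst \<omega>) (snd \<omega>) t \<in> B}" for y
    by (auto simp: space_pair_measure)
  show ?thesis
    using noise.measurable_emeasure_Pair[OF S] unfolding slice .
qed

lemma prob_space_lawX:
  assumes "f \<in> Dens mE"
  shows "prob_space (lawX \<alpha> h t f)"
  unfolding lawX_def
  by (rule prob_space.prob_space_distr[OF prob_space_pair[OF prob_space_density_Dens[OF assms] prob_space_noise]])
    (simp add: sets_mE)

lemma absolutely_continuous_lawX:
  assumes f: "f \<in> Dens mE"
  shows "absolutely_continuous mE (lawX \<alpha> h t f)"
  unfolding absolutely_continuous_def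
proof
  fix A assume A: "A \<in> null_sets mE"
  then have [measurable]: "A \<in> sets borel"
    by (simp add: null_sets_def sets_mE)
  have [measurable]: "f \<in> borel_measurable borel"
    using f by (rule measurable_Dens)
  interpret pair_sigma_finite "density mE f" noise
    using f by (simp add: pair_sigma_finite_def prob_space_imp_sigma_finite prob_space_density_Dens
        prob_space_noise)
  let ?S = "(\<lambda>(x, e, th). Xpath \<alpha> x e th t) -` A \<inter> space (density mE f \<Otimes>\<^sub>M noise)"
  have S: "?S \<in> sets (density mE f \<Otimes>\<^sub>M noise)"
    by (rule measurable_sets[OF measurable_Xpath_noise]) (simp_all add: sets_mE)
  have "emeasure (lawX \<alpha> h t f) A = emeasure (density mE f \<Otimes>\<^sub>M noise) ?S"
    unfolding lawX_def by (rule emeasure_distr) (simp_all add: sets_mE)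
  also have "\<dots> = (\<integral>\<^sup>+ \<omega>. emeasure (density mE f) ((\<lambda>x. (x, \<omega>)) -` ?S) \<partial>noise)"
    by (rule emeasure_pair_measure_alt2[OF S])
  also have "\<dots> = (\<integral>\<^sup>+ \<omega>. 0 \<partial>noise)"
    using AE_noise_regular
  proof (intro nn_integral_cong_AE, eventually_elim)
    case (elim \<omega>)
    have "AE x in mE. Xpath \<alpha> x (fst \<omega>) (snd \<omega>) t \<notin> A"
      using AE_mE_Xpath_notin_null[OF alpha_pos _ _ _ A] elim by blast
    then have "AE x in density mE f. x \<notin> (\<lambda>x. (x, \<omega>)) -` ?S"
      by (subst AE_density) (measurable, elim AE_mp, auto simp: case_prod_beta intro!: AE_I2)
    then have "(\<lambda>x. (x, \<omega>)) -` ?S \<in> null_sets (density mE f)"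
      using AE_iff_null_sets[OF sets_Pair2[OF S]] by blast
    then show ?case
      by auto
  qed
  finally show "A \<in> null_sets (lawX \<alpha> h t f)"
    by (simp add: null_sets_def lawX_def)
qed

section \<open>A lower kernel for the transition operators\<close>

(* Started at y, the first jump occurs before t iff the first exponential clock is at most
   jump_threshold t y, and a second one cannot occur before t if the second clock exceeds it. *)
definition jump_threshold :: "real \<Rightarrow> real \<Rightarrow> real" where
  "jump_threshold t y = y powr \<alpha> * (exp (\<alpha> * t) - 1)"

definition one_jump_prob :: "real \<Rightarrow> real \<Rightarrow> real" where
  "one_jump_prob t y = (1 - exp (- jump_threshold t y)) * exp (- jump_threshold t y)"

(* The m-density at x of the law of e^t y theta_1, weighted by the probability of the single-jump
   event above; the first argument is the target point, as in pre_Harris. *)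
definition lower_kernel :: "real \<Rightarrow> real \<Rightarrow> real \<Rightarrow> real" where
  "lower_kernel t x y = one_jump_prob t y * indicator {0<..} y * h01 (x / (exp t * y)) / (exp t * y)\<^sup>2"

lemma lower_kernel_measurable [measurable]:
  "(\<lambda>(x, y). lower_kernel t x y) \<in> borel_measurable (borel \<Otimes>\<^sub>M borel)"
  unfolding lower_kernel_def one_jump_prob_def jump_threshold_def by measurable

context
  fixes t :: real
  assumes t_pos: "0 < t"
begin

lemma jump_threshold_pos: "0 < y \<Longrightarrow> 0 < jump_threshold t y"
  using alpha_pos t_pos by (simp add: jump_threshold_def)

lemma one_jump_prob_pos: "0 < y \<Longrightarrow> 0 < one_jump_prob t y"
  using jump_threshold_pos by (simp add: one_jump_prob_def)

lemma lower_kernel_nonneg: "0 \<le> lower_kernel t x y"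
  using one_jump_prob_pos[of y] h01_nonneg[of "x / (exp t * y)"]
  by (cases "0 < y") (simp_all add: lower_kernel_def)

lemma emeasure_single_jump_event:
  fixes y :: real
  defines "c \<equiv> jump_threshold t y"
  assumes "0 < y" and B: "B \<in> sets borel"
  shows "emeasure noise ({e. e 0 \<le> c \<and> c < e 1} \<times> {th. th 0 \<in> (\<lambda>z. exp t * y * z) -` B})
    = ennreal (one_jump_prob t y) * emeasure (thetaM h) ((\<lambda>z. exp t * y * z) -` B)"
proof -
  interpret theta_seq: prob_space theta_seq
    by (intro prob_space_PiM prob_space_thetaM)
  have c: "0 < c"
    using jump_threshold_pos assms(2) by (simp add: c_def)
  define A where "A i = (if i = 0 then {..c} else {c<..})" for i :: nat
  have eps_set: "{e. e 0 \<le> c \<and> c < e 1} = prod_emb UNIV (\<lambda>_. epsM) {0, 1} (Pi\<^sub>E {0, 1} A)"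
    unfolding set_eq_iff prod_emb_iff by (simp add: restrict_PiE_iff conj_commute A_def)
  have eps: "emeasure eps_seq {e. e 0 \<le> c \<and> c < e 1} = ennreal (one_jump_prob t y)"
    using c unfolding eps_set by (simp add: emeasure_PiM_emb prob_space_epsM A_def emeasure_epsM_atMost
        emeasure_epsM_greaterThan one_jump_prob_def c_def ennreal_mult[symmetric])
  have S: "(\<lambda>z. exp t * y * z) -` B \<in> sets borel"
    by (rule vimage_scale_sets_borel[OF B])
  have theta_set: "{th. th 0 \<in> (\<lambda>z. exp t * y * z) -` B} = prod_emb UNIV (\<lambda>_. thetaM h) {0} (Pi\<^sub>E {0} (\<lambda>_. (\<lambda>z. exp t * y * z) -` B))"
    unfolding set_eq_iff prod_emb_iff by (simp add: restrict_PiE_iff)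
  have theta: "emeasure theta_seq {th. th 0 \<in> (\<lambda>z. exp t * y * z) -` B} = emeasure (thetaM h) ((\<lambda>z. exp t * y * z) -` B)"
    by (subst theta_set) (simp add: emeasure_PiM_emb prob_space_thetaM sets_thetaM S)
  have "{e. e 0 \<le> c \<and> c < e 1} \<in> sets eps_seq" "{th. th 0 \<in> (\<lambda>z. exp t * y * z) -` B} \<in> sets theta_seq"
    unfolding eps_set theta_set using S by (auto intro!: sets_PiM_I simp: A_def sets_epsM sets_thetaM)
  then show ?thesis
    using eps theta by (simp only: theta_seq.emeasure_pair_measure_Times)
qed

lemma single_jump_le_emeasure_noise:
  assumes "0 < y" and B[measurable]: "B \<in> sets borel"
  shows "ennreal (one_jump_prob t y) * emeasure (thetaM h) ((\<lambda>z. exp t * y * z) -` B)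
    \<le> emeasure noise {\<omega> \<in> space noise. Xpath \<alpha> y (fst \<omega>) (snd \<omega>) t \<in> B}"
proof -
  let ?c = "jump_threshold t y"
  have "emeasure noise ({e. e 0 \<le> ?c \<and> ?c < e 1} \<times> {th. th 0 \<in> (\<lambda>z. exp t * y * z) -` B})
      \<le> emeasure noise {\<omega> \<in> space noise. Xpath \<alpha> y (fst \<omega>) (snd \<omega>) t \<in> B}"
  proof (rule emeasure_mono_AE)
    show "AE \<omega> in noise. \<omega> \<in> {e. e 0 \<le> ?c \<and> ?c < e 1} \<times> {th. th 0 \<in> (\<lambda>z. exp t * y * z) -` B}
        \<longrightarrow> \<omega> \<in> {\<omega> \<in> space noise. Xpath \<alpha> y (fst \<omega>) (snd \<omega>) t \<in> B}"
      using AE_noise_regular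
    proof eventually_elim
      case (elim \<omega>)
      then show ?case
        using Xpath_single_jump[of \<alpha> y "fst \<omega>" "snd \<omega>" t] alpha_pos \<open>0 < y\<close>
        by (auto simp: jump_threshold_def space_pair_measure space_PiM mult_ac)
    qed
    show "{\<omega> \<in> space noise. Xpath \<alpha> y (fst \<omega>) (snd \<omega>) t \<in> B} \<in> sets noise"
      by measurable
  qed
  then show ?thesis
    using emeasure_single_jump_event[OF assms] by simp
qed

lemma set_nn_integral_lower_kernel:
  assumes "0 < y" and B: "B \<in> sets borel"
  shows "(\<integral>\<^sup>+ x. ennreal (lower_kernel t x y) * indicator B x \<partial>mE)
    = ennreal (one_jump_prob t y) * emeasure (thetaM h) ((\<lambda>z. exp t * y * z) -` B)"
proof -
  define k where "k = exp t * y"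
  have k: "0 < k"
    using assms(1) by (simp add: k_def)
  define F where "F x = ennreal (indicator {0<..} x * x) * (ennreal (lower_kernel t x y) * indicator B x)" for x
  have F[measurable]: "F \<in> borel_measurable borel"
    unfolding F_def using B by measurable
  have scale: "ennreal k * F (k * z)
      = ennreal (one_jump_prob t y) * (ennreal (h01 z * z) * indicator ((\<lambda>z. k * z) -` B) z)" for z
  proof (cases "0 < z")
    case True
    have nonneg: "0 \<le> one_jump_prob t y" "0 \<le> h01 z * z" "0 \<le> k * z" "0 \<le> lower_kernel t (k * z) y"
      using one_jump_prob_pos[OF assms(1)] h01_nonneg[of z] True k lower_kernel_nonneg by simp_all
    have "ennreal k * F (k * z) = ennreal (k * (k * z) * lower_kernel t (k * z) y) * indicator B (k * z)"
      using True k nonneg by (simp add: F_def ennreal_mult mult.assoc)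
    also have "k * (k * z) * lower_kernel t (k * z) y = one_jump_prob t y * (h01 z * z)"
      using True k assms(1) by (simp add: lower_kernel_def k_def power2_eq_square field_simps)
    finally show ?thesis
      using nonneg by (simp add: ennreal_mult mult.assoc indicator_def)
  next
    case False
    then show ?thesis
      using k by (simp add: F_def h01_def zero_less_mult_iff)
  qed
  have "(\<integral>\<^sup>+ x. ennreal (lower_kernel t x y) * indicator B x \<partial>mE) = (\<integral>\<^sup>+ x. F x \<partial>lborel)"
    unfolding mE_def F_def using B by (subst nn_integral_density) auto
  also have "\<dots> = ennreal k * (\<integral>\<^sup>+ z. F (k * z) \<partial>lborel)"
    using nn_integral_real_affine[OF F, of k 0] k by simp
  also have "\<dots> = (\<integral>\<^sup>+ z. ennreal (one_jump_prob t y) * (ennreal (h01 z * z) * indicator ((\<lambda>z. k * z) -` B) z) \<partial>lborel)"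
    by (subst nn_integral_cmult[symmetric]) (auto simp: scale)
  also have "\<dots> = ennreal (one_jump_prob t y) * emeasure (thetaM h) ((\<lambda>z. k * z) -` B)"
    using vimage_scale_sets_borel[OF B, of k]
    by (subst nn_integral_cmult) (auto simp: thetaM_eq emeasure_density)
  finally show ?thesis
    by (simp add: k_def)
qed

lemma set_nn_integral_lower_kernel_le_lawX:
  assumes f: "f \<in> Dens mE" and B[measurable]: "B \<in> sets borel"
  shows "(\<integral>\<^sup>+ x. (\<integral>\<^sup>+ y. ennreal (lower_kernel t x y * f y) \<partial>mE) * indicator B x \<partial>mE)
    \<le> emeasure (lawX \<alpha> h t f) B"
proof -
  have [measurable]: "f \<in> borel_measurable borel"
    using f by (rule measurable_Dens)
  interpret mE: pair_sigma_finite mE mE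
    by (simp add: pair_sigma_finite_def sigma_finite_mE)
  define N where "N y = emeasure noise {\<omega> \<in> space noise. Xpath \<alpha> y (fst \<omega>) (snd \<omega>) t \<in> B}" for y
  have N[measurable]: "N \<in> borel_measurable borel"
    unfolding N_def[abs_def] by (rule measurable_emeasure_Xpath_preimage[OF B])
  have "(\<integral>\<^sup>+ x. (\<integral>\<^sup>+ y. ennreal (lower_kernel t x y * f y) \<partial>mE) * indicator B x \<partial>mE)
      = (\<integral>\<^sup>+ x. \<integral>\<^sup>+ y. ennreal (f y) * (ennreal (lower_kernel t x y) * indicator B x) \<partial>mE \<partial>mE)"
  proof (intro nn_integral_cong)
    fix x
    have "(\<integral>\<^sup>+ y. ennreal (lower_kernel t x y * f y) \<partial>mE) * indicator B x
        = (\<integral>\<^sup>+ y. ennreal (lower_kernel t x y * f y) * indicator B x \<partial>mE)"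
      using f by (intro nn_integral_multc[symmetric]) measurable
    then show "(\<integral>\<^sup>+ y. ennreal (lower_kernel t x y * f y) \<partial>mE) * indicator B x
        = (\<integral>\<^sup>+ y. ennreal (f y) * (ennreal (lower_kernel t x y) * indicator B x) \<partial>mE)"
      by (simp add: ennreal_mult'[OF lower_kernel_nonneg] ennreal_mult''[OF lower_kernel_nonneg] mult_ac)
  qed
  also have "\<dots> = (\<integral>\<^sup>+ y. ennreal (f y) * (\<integral>\<^sup>+ x. ennreal (lower_kernel t x y) * indicator B x \<partial>mE) \<partial>mE)"
    using f by (subst mE.Fubini') (simp_all add: nn_integral_cmult)
  also have "\<dots> \<le> (\<integral>\<^sup>+ y. ennreal (f y) * N y \<partial>mE)"
  proof (intro nn_integral_mono mult_left_mono)
    fix y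
    show "(\<integral>\<^sup>+ x. ennreal (lower_kernel t x y) * indicator B x \<partial>mE) \<le> N y"
    proof (cases "0 < y")
      case True
      then show ?thesis
        using single_jump_le_emeasure_noise[OF True B]
        by (simp add: set_nn_integral_lower_kernel[OF True B] N_def)
    qed (simp add: lower_kernel_def)
  qed simp
  also have "\<dots> = (\<integral>\<^sup>+ y. N y \<partial>density mE f)"
    using f by (simp add: nn_integral_density)
  also have "\<dots> = emeasure (lawX \<alpha> h t f) B"
    using f by (simp add: emeasure_lawX N_def)
  finally show ?thesis .
qed

lemma AE_lower_kernel_le_Pt:
  assumes f: "f \<in> Dens mE"
  shows "AE x in mE. (\<integral>\<^sup>+ y. ennreal (lower_kernel t x y * f y) \<partial>mE) \<le> ennreal (Pt \<alpha> h t f x)"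
proof -
  interpret mE: sigma_finite_measure mE
    by (rule sigma_finite_mE)
  have [measurable]: "f \<in> borel_measurable borel"
    using f by (rule measurable_Dens)
  let ?L = "lawX \<alpha> h t f"
  have L: "prob_space ?L" "absolutely_continuous mE ?L" "sets ?L = sets mE"
    using f prob_space_lawX absolutely_continuous_lawX by (auto simp: lawX_def sets_mE)
  have density_RN: "density mE (RN_deriv mE ?L) = ?L"
    by (rule mE.density_RN_deriv[OF L(2,3)])
  have "AE x in mE. (\<integral>\<^sup>+ y. ennreal (lower_kernel t x y * f y) \<partial>mE) \<le> RN_deriv mE ?L x"
  proof (rule AE_le_if_nn_set_integral_le)
    show "(\<lambda>x. \<integral>\<^sup>+ y. ennreal (lower_kernel t x y * f y) \<partial>mE) \<in> borel_measurable mE"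
      by measurable
    show "RN_deriv mE ?L \<in> borel_measurable mE"
      by simp
    have "integral\<^sup>N mE (RN_deriv mE ?L) = emeasure (density mE (RN_deriv mE ?L)) (space mE)"
      by (simp add: emeasure_density)
    also have "\<dots> = 1"
      using prob_space.emeasure_space_1[OF L(1)] sets_eq_imp_space_eq[OF L(3)] by (simp only: density_RN)
    finally show "integral\<^sup>N mE (RN_deriv mE ?L) \<noteq> \<infinity>"
      by simp
  next
    fix B assume B: "B \<in> sets mE"
    then have "(\<integral>\<^sup>+ x. (\<integral>\<^sup>+ y. ennreal (lower_kernel t x y * f y) \<partial>mE) * indicator B x \<partial>mE) \<le> emeasure ?L B"
      using f by (intro set_nn_integral_lower_kernel_le_lawX) (simp_all add: sets_mE)
    also have "\<dots> = (\<integral>\<^sup>+ x. RN_deriv mE ?L x * indicator B x \<partial>mE)"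
      using B by (subst density_RN[symmetric]) (simp add: emeasure_density)
    finally show "(\<integral>\<^sup>+ x. (\<integral>\<^sup>+ y. ennreal (lower_kernel t x y * f y) \<partial>mE) * indicator B x \<partial>mE)
        \<le> (\<integral>\<^sup>+ x. RN_deriv mE ?L x * indicator B x \<partial>mE)" .
  qed
  moreover have "AE x in mE. RN_deriv mE ?L x \<noteq> \<infinity>"
    by (rule mE.RN_deriv_finite[OF prob_space_imp_sigma_finite[OF L(1)] L(2,3)])
  ultimately show ?thesis
    by eventually_elim (simp add: Pt_def ennreal_enn2real_if)
qed

lemma emeasure_mE_null_if_scaled_thetaM_null:
  assumes B[measurable]: "B \<in> sets borel"
    and null: "AE y in mE. emeasure (thetaM h) ((\<lambda>z. exp t * y * z) -` B) = 0"
  shows "emeasure mE B = 0"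
proof -
  interpret theta: prob_space "thetaM h"
    by (rule prob_space_thetaM)
  interpret pair_sigma_finite mE "thetaM h"
    by (simp add: pair_sigma_finite_def sigma_finite_mE theta.sigma_finite_measure_axioms)
  have G: "(\<lambda>(y, z). indicator B (exp t * y * z) :: ennreal) \<in> borel_measurable (mE \<Otimes>\<^sub>M thetaM h)"
    by measurable
  have "(\<integral>\<^sup>+ z. emeasure mE ((\<lambda>y. exp t * z * y) -` B) \<partial>thetaM h)
      = (\<integral>\<^sup>+ z. \<integral>\<^sup>+ y. indicator B (exp t * y * z) \<partial>mE \<partial>thetaM h)"
    by (simp only: emeasure_vimage_scale[OF sets_mE B]) (simp only: mult_ac)
  also have "\<dots> = (\<integral>\<^sup>+ y. \<integral>\<^sup>+ z. indicator B (exp t * y * z) \<partial>thetaM h \<partial>mE)"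
    using G by (rule Fubini')
  also have "\<dots> = (\<integral>\<^sup>+ y. emeasure (thetaM h) ((\<lambda>z. exp t * y * z) -` B) \<partial>mE)"
    by (simp only: emeasure_vimage_scale[OF sets_thetaM B])
  also have "\<dots> = 0"
    using null by (simp add: nn_integral_0_iff_AE)
  finally have "AE z in thetaM h. emeasure mE ((\<lambda>y. exp t * z * y) -` B) = 0"
    by (subst (asm) nn_integral_0_iff_AE) simp_all
  then have "AE z in thetaM h. emeasure mE B = 0"
    using AE_thetaM
  proof eventually_elim
    case (elim z)
    then show ?case
      using emeasure_mE_scale[of "exp t * z" B] by simp
  qed
  then show ?thesis
    by simp
qed

lemma AE_lower_kernel_mass_pos: "AE x in mE. 0 < (\<integral>\<^sup>+ y. ennreal (lower_kernel t x y) \<partial>mE)"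
proof -
  interpret mE: pair_sigma_finite mE mE
    by (simp add: pair_sigma_finite_def sigma_finite_mE)
  define N where "N = {x \<in> space mE. (\<integral>\<^sup>+ y. ennreal (lower_kernel t x y) \<partial>mE) = 0}"
  have N[measurable]: "N \<in> sets borel"
    unfolding N_def by measurable
  have "(\<integral>\<^sup>+ y. \<integral>\<^sup>+ x. ennreal (lower_kernel t x y) * indicator N x \<partial>mE \<partial>mE)
      = (\<integral>\<^sup>+ x. (\<integral>\<^sup>+ y. ennreal (lower_kernel t x y) \<partial>mE) * indicator N x \<partial>mE)"
    by (subst mE.Fubini') (simp_all add: nn_integral_multc)
  also have "\<dots> = 0"
    by (rule nn_integral_zero'[OF AE_I2]) (auto simp: N_def split: split_indicator)
  finally have "AE y in mE. (\<integral>\<^sup>+ x. ennreal (lower_kernel t x y) * indicator N x \<partial>mE) = 0"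
    by (subst (asm) nn_integral_0_iff_AE) simp_all
  moreover have "AE y in mE. 0 < y"
    using emeasure_mE_nonpos by (intro AE_I'[of "{..0}"]) (auto simp: null_sets_def sets_mE)
  ultimately have "AE y in mE. emeasure (thetaM h) ((\<lambda>z. exp t * y * z) -` N) = 0"
  proof eventually_elim
    case (elim y)
    then show ?case
      using one_jump_prob_pos[OF elim(2)] by (simp add: set_nn_integral_lower_kernel[OF _ N] ennreal_eq_0_iff)
  qed
  then have "N \<in> null_sets mE"
    using emeasure_mE_null_if_scaled_thetaM_null[OF N] by (simp add: null_sets_def sets_mE)
  then show ?thesis
    by (rule AE_I') (auto simp: N_def zero_less_iff_neq_zero)
qed

lemma pre_Harris_Pt: "pre_Harris mE (Pt \<alpha> h t)"
  unfolding pre_Harris_def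
proof (intro exI[of _ "lower_kernel t"] conjI allI ballI)
  show "(\<lambda>(x, y). lower_kernel t x y) \<in> borel_measurable (mE \<Otimes>\<^sub>M mE)"
    by measurable
qed (simp_all add: lower_kernel_nonneg AE_lower_kernel_le_Pt AE_lower_kernel_mass_pos)

end

end

theorem lemma3p2:
  fixes \<alpha> :: real and h :: "real \<Rightarrow> real"
  assumes "0 < \<alpha>"
    and "(\<lambda>r. indicator {0<..<1} r * h r) \<in> borel_measurable borel"
    and "\<forall>r\<in>{0<..<1}. 0 \<le> h r"
    and "(\<integral>\<^sup>+ r. ennreal (indicator {0<..<1} r * h r * r) \<partial>lborel) = 1"
  shows "(\<forall>t>0. pre_Harris mE (Pt \<alpha> h t)) \<and> semigroup_partially_integral (\<lambda>s. Pt \<alpha> h s)"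
proof -
  interpret growth_fragmentation \<alpha> h
    using assms by unfold_locales
  have "partially_integral mE (Pt \<alpha> h 1)"
    by (intro partially_integral_if_pre_Harris sigma_finite_mE emeasure_mE_space_ne_0 pre_Harris_Pt) simp
  then show ?thesis
    unfolding semigroup_partially_integral_def using pre_Harris_Pt by (auto intro!: exI[of _ 1])
qed

end
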